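(* Let $\mathcal{C}l(E)$ be a general Clifford algebra on $E=\{1,\dots,p\}$ and $n\ge1$. For $\mathcal{C}l(E)$-symmetric matrices $\mathcal M$ with the diffusion operator $\mathrm L_{\mathbb E,\mathcal Cl}$, let $P(X)=\det(\mathcal M-X\,\mathrm{Id})$ and $U(X)=(\mathcal M-X\,\mathrm{Id})^{-1}$. Then $U(X)$ is again $\mathcal{C}l(E)$-symmetric, i.e. its blocks are $U(X)^{A,B}=(A\Delta B|B)U(X)^{A\Delta B}$ for matrices $U(X)^C:=U(X)^{C,\emptyset}$, and $$\Gamma_{\mathbb E,\mathcal Cl}(P(X),P(Y))=\frac{2^p}{Y-X}\big(P'(X)P(Y)-P'(Y)P(X)\big),$$ $$\frac{\mathrm L_{\mathbb E,\mathcal Cl}(P)}{P}=\Gamma_{\mathbb E,\mathcal Cl}(\log P(X),\log P(X))-\frac12\Big(\sum_{A\subset E}(A|A)\Big)\mathrm{trace}\big(U(X)^2\big)-2^{p-1}\sum_{C\subset E}(C|C)H(C)\big(\mathrm{trace}\,U(X)^C\big)^2,$$ where $H(C)=\sum_{A\subset E}(A|C)(C|A)$. Moreover $\mathrm{trace}(U(X)^2)=\frac{P'^2}{P^2}-\frac{P''}{P}$.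
   Context: General Clifford algebra: real algebra with basis $(\omega_A)_{A\subset E}$, $\omega_\emptyset$ the unit, product $\omega_A\omega_B=(A|B)\,\omega_{A\Delta B}$ ($A\Delta B$ the symmetric difference), where $(A|B)=\prod_{i\in A,j\in B}(i|j)$, with $(i|j)=1$ for $i<j$ and arbitrary fixed signs $(j|i)\in\{\pm1\}$ ($i<j$), $(i|i)\in\{\pm1\}$. $\mathcal Cl(E)$-symmetric matrix: given real $n\times n$ matrices $M^C$, $C\subset E$, with $(M^C)^T=(C|C)M^C$, $\mathcal M$ is the real $(n2^p)\times(n2^p)$ block matrix with blocks indexed by pairs $(A,B)$ of subsets of $E$, block $\mathcal M^{A,B}=(A\Delta B|B)M^{A\Delta B}$. $\mathrm L_{\mathbb E,\mathcal Cl}$ is the diffusion operator in the coordinates $M^C_{ij}$ determined by $\mathrm L(M^C_{ij})=0$, $\Gamma(M^A_{ij},M^B_{kl})=\tfrac12\delta_{A,B}(\delta_{ik}\delta_{jl}+(A|A)\delta_{il}\delta_{jk})$, via the chain rule $\mathrm L(\Phi(f))=\sum_i\partial_i\Phi\,\mathrm Lf_i+\sum_{ij}\partial^2_{ij}\Phi\,\Gamma(f_i,f_j)$, $\Gamma(f,g)=\tfrac12(\mathrm L(fg)-f\mathrm Lg-g\mathrm Lf)$. Primes denote derivatives in $X$. *)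

theory Defs
  imports "HOL-Analysis.Analysis"
begin

text \<open>Signs of the general Clifford algebra on a finite totally ordered set E (the type 'e):
  s i j stands for (i|j).\<close>

definition sign_ok :: "('e::linorder \<Rightarrow> 'e \<Rightarrow> real) \<Rightarrow> bool" where
  "sign_ok s \<longleftrightarrow> (\<forall>i j. i < j \<longrightarrow> s i j = 1 \<and> (s j i = 1 \<or> s j i = -1))
                 \<and> (\<forall>i. s i i = 1 \<or> s i i = -1)"

definition clsgn :: "('e \<Rightarrow> 'e \<Rightarrow> real) \<Rightarrow> 'e set \<Rightarrow> 'e set \<Rightarrow> real" where
  "clsgn s A B = (\<Prod>i\<in>A. \<Prod>j\<in>B. s i j)"

definition symd :: "'a set \<Rightarrow> 'a set \<Rightarrow> 'a set" where
  "symd A B = (A - B) \<union> (B - A)"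

definition clsym_coeffs :: "('e::finite \<Rightarrow> 'e \<Rightarrow> real) \<Rightarrow> real^'n^'n^('e set) \<Rightarrow> bool" where
  "clsym_coeffs s m \<longleftrightarrow> (\<forall>C. transpose (m $ C) = clsgn s C C *\<^sub>R (m $ C))"

definition cl_block_matrix ::
  "('e::finite \<Rightarrow> 'e \<Rightarrow> real) \<Rightarrow> real^'n^'n^('e set) \<Rightarrow> real^('e set \<times> 'n)^('e set \<times> 'n)" where
  "cl_block_matrix s m = (\<chi> a b. clsgn s (symd (fst a) (fst b)) (fst b)
                              * m $ (symd (fst a) (fst b)) $ snd a $ snd b)"

definition coord :: "'e::finite set \<Rightarrow> 'n \<Rightarrow> 'n \<Rightarrow> real^'n^'n^('e set)" where
  "coord C i j = (\<chi> C' k l. if C' = C \<and> k = i \<and> l = j then 1 else 0)"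

definition pd :: "(real^'n^'n^('e::finite set) \<Rightarrow> real) \<Rightarrow> 'e set \<Rightarrow> 'n \<Rightarrow> 'n \<Rightarrow> real^'n^'n^('e set) \<Rightarrow> real" where
  "pd F C i j m = deriv (\<lambda>t. F (m + t *\<^sub>R coord C i j)) 0"

text \<open>Gamma(M^A_ij, M^A_kl) (zero for distinct subsets).\<close>
definition gam_coord :: "('e \<Rightarrow> 'e \<Rightarrow> real) \<Rightarrow> 'e set \<Rightarrow> 'n \<Rightarrow> 'n \<Rightarrow> 'n \<Rightarrow> 'n \<Rightarrow> real" where
  "gam_coord s A i j k l = ((if i = k \<and> j = l then 1 else 0)
                           + clsgn s A A * (if i = l \<and> j = k then 1 else 0)) / 2"

text \<open>The diffusion operator L_{E,Cl}: L(M^C_ij)=0, so by the chain rule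
  L F = sum of Gamma(x_a,x_b) times the second partial derivatives of F.\<close>
definition LCl :: "('e::finite \<Rightarrow> 'e \<Rightarrow> real) \<Rightarrow> (real^'n^'n^('e set) \<Rightarrow> real) \<Rightarrow> real^'n^'n^('e set) \<Rightarrow> real" where
  "LCl s F m = (\<Sum>A\<in>UNIV. \<Sum>i\<in>UNIV. \<Sum>j\<in>UNIV. \<Sum>k\<in>UNIV. \<Sum>l\<in>UNIV.
                  gam_coord s A i j k l * pd (pd F A k l) A i j m)"

definition GammaCl :: "('e::finite \<Rightarrow> 'e \<Rightarrow> real) \<Rightarrow> (real^'n^'n^('e set) \<Rightarrow> real)
                      \<Rightarrow> (real^'n^'n^('e set) \<Rightarrow> real) \<Rightarrow> real^'n^'n^('e set) \<Rightarrow> real" where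
  "GammaCl s F G m = (LCl s (\<lambda>x. F x * G x) m - F m * LCl s G m - G m * LCl s F m) / 2"

definition Pcl :: "('e::finite \<Rightarrow> 'e \<Rightarrow> real) \<Rightarrow> real^'n^'n^('e set) \<Rightarrow> real \<Rightarrow> real" where
  "Pcl s m X = det (cl_block_matrix s m - X *\<^sub>R mat 1)"

end

theory Submission
  imports Defs "HOL-Computational_Algebra.Polynomial" "HOL-Library.Cardinality"
begin

text \<open>The block matrix \<open>\<M>\<close> represents \<open>\<Sum>\<^sub>C M\<^sup>C \<omega>\<^sub>C\<close> acting on \<open>\<C>l(E) \<otimes> \<real>\<^sup>n\<close>; this
  representation is multiplicative, so \<open>U(X) = (\<M> - X Id)\<^sup>-\<^sup>1\<close> is again a block matrix, and it is
  Clifford-symmetric because it is symmetric. As \<open>\<M>\<close> is linear in the coordinates \<open>M\<^sup>C\<^sub>i\<^sub>j\<close>,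
  Jacobi's formula gives \<open>\<partial>P = P trace (U E)\<close> and
  \<open>\<partial>\<^sup>2P = P (trace (U E) trace (U E') - trace (U E U E'))\<close>, where \<open>E\<close>, \<open>E'\<close> are the block images of
  coordinate directions. Traces against block matrices collapse to \<open>2\<^sup>p\<close> times contractions of
  coefficients, and summing the signs \<open>(C\<Delta>D|C\<Delta>D)\<close> over \<open>C\<close> produces \<open>\<Sum>\<^sub>A (A|A)\<close> and \<open>H\<close>.
  For \<open>\<Gamma>(P(X), P(Y))\<close> the resolvent identity \<open>U(X) - U(Y) = (X - Y) U(X) U(Y)\<close> gives the formula
  when \<open>Y\<close> is not an eigenvalue, and continuity in \<open>Y\<close> gives it for all \<open>Y \<noteq> X\<close>. Finally
  \<open>P'/P = - trace U\<close> together with its derivative yields \<open>trace U\<^sup>2\<close>.\<close>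

section \<open>Signs of the Clifford algebra\<close>

lemma symd_commute: "symd A B = symd B A"
  by (auto simp: symd_def)

lemma symd_eq_iff: "symd A B = C \<longleftrightarrow> A = symd C B"
  by (auto simp: symd_def)

lemma symd_simps [simp]:
  "symd A A = {}" "symd A {} = A" "symd {} A = A"
  "symd A (symd A B) = B" "symd (symd A B) B = A" "symd B (symd A B) = A"
  by (auto simp: symd_def)

lemma sum_symd_reindex:
  "(\<Sum>D\<in>(UNIV::'a::finite set set). f D) = (\<Sum>A\<in>UNIV. f (symd A0 A))"
  by (rule sum.reindex_bij_witness[of _ "symd A0" "symd A0"]) auto

lemma prod_symd:
  fixes g :: "'a \<Rightarrow> real"
  assumes "finite A" "finite B" and sq: "\<And>i. g i * g i = 1"
  shows "prod g (symd A B) = prod g A * prod g B"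
proof -
  have "prod g A * prod g B = prod g (A \<union> B) * prod g (A \<inter> B)"
    using prod.union_inter[OF assms(1,2), of g] by simp
  also have "prod g (A \<union> B) = prod g (symd A B) * prod g (A \<inter> B)"
    using assms(1,2) by (subst prod.union_disjoint[symmetric]) (auto simp: symd_def intro: prod.cong)
  also have "prod g (A \<inter> B) * prod g (A \<inter> B) = 1"
    using sq by (simp add: prod.distrib[symmetric])
  ultimately show ?thesis by (simp add: mult.assoc)
qed

lemma clsgn_empty [simp]: "clsgn s {} B = 1" "clsgn s A {} = 1"
  by (auto simp: clsgn_def)

locale clifford_signs =
  fixes s :: "'e::{finite,linorder} \<Rightarrow> 'e \<Rightarrow> real"
  assumes sign_ok: "sign_ok s"
begin

lemma sign_mult_self: "s i j * s i j = 1"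
  using sign_ok unfolding sign_ok_def by (metis linorder_neqE mult_minus_left mult_1 minus_minus)

lemma clsgn_mult_self [simp]: "clsgn s A B * clsgn s A B = 1"
  by (simp add: clsgn_def prod.distrib[symmetric] sign_mult_self)

lemma clsgn_mult_self_left [simp]: "clsgn s A B * (clsgn s A B * x) = x"
  by (simp add: mult.assoc[symmetric])

lemma clsgn_symd_left: "clsgn s (symd A B) C = clsgn s A C * clsgn s B C"
  unfolding clsgn_def by (rule prod_symd) (auto simp: prod.distrib[symmetric] sign_mult_self)

lemma clsgn_symd_right: "clsgn s A (symd B C) = clsgn s A B * clsgn s A C"
  unfolding clsgn_def by (subst prod_symd) (auto simp: prod.distrib[symmetric] sign_mult_self)

lemmas clsgn_simps = clsgn_symd_left clsgn_symd_right

end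

section \<open>Clifford block matrices\<close>

lemma cl_block_matrix_nth:
  "cl_block_matrix s m $ a $ b
     = clsgn s (symd (fst a) (fst b)) (fst b) * m $ symd (fst a) (fst b) $ snd a $ snd b"
  by (simp add: cl_block_matrix_def)

lemma cl_block_matrix_add: "cl_block_matrix s (x + y) = cl_block_matrix s x + cl_block_matrix s y"
  by (simp add: cl_block_matrix_def vec_eq_iff algebra_simps)

lemma cl_block_matrix_scaleR: "cl_block_matrix s (c *\<^sub>R x) = c *\<^sub>R cl_block_matrix s x"
  by (simp add: cl_block_matrix_def vec_eq_iff)

lemma cl_block_matrix_diff: "cl_block_matrix s (x - y) = cl_block_matrix s x - cl_block_matrix s y"
  by (simp add: cl_block_matrix_def vec_eq_iff algebra_simps)

definition cl_one :: "real^'n^'n^('e::finite set)" where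
  "cl_one = (\<chi> C i j. if C = {} \<and> i = j then 1 else 0)"

lemma cl_block_matrix_cl_one: "cl_block_matrix s cl_one = mat 1"
  by (auto simp: cl_block_matrix_def cl_one_def vec_eq_iff mat_def symd_def)

text \<open>The product in \<open>\<C>l(E) \<otimes> M\<^sub>n(\<real>)\<close>:
  \<open>(\<Sum>\<^sub>A W\<^sup>A \<omega>\<^sub>A)(\<Sum>\<^sub>B V\<^sup>B \<omega>\<^sub>B) = \<Sum>\<^sub>C (\<Sum>\<^sub>A (A|A\<Delta>C) W\<^sup>A V\<^sup>A\<^sup>\<Delta>\<^sup>C) \<omega>\<^sub>C\<close>.\<close>
definition cl_mult :: "('e \<Rightarrow> 'e \<Rightarrow> real) \<Rightarrow> real^'n^'n^('e::finite set) \<Rightarrow> real^'n^'n^('e set)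
    \<Rightarrow> real^'n^'n^('e set)" where
  "cl_mult s W V = (\<chi> C i j. \<Sum>A\<in>UNIV. \<Sum>r\<in>UNIV. clsgn s A (symd A C) * W$A$i$r * V$(symd A C)$r$j)"

text \<open>The coefficients \<open>U\<^sup>C = U\<^sup>C\<^sup>,\<^sup>\<emptyset>\<close> of a block matrix, read off its first block column.\<close>
definition cl_coeffs :: "real^('e::finite set \<times> 'n::finite)^('e set \<times> 'n) \<Rightarrow> real^'n^'n^('e set)" where
  "cl_coeffs U = (\<chi> C i j. U $ (C, i) $ ({}, j))"

lemma sum_prod_UNIV:
  "(\<Sum>y\<in>(UNIV::('a::finite \<times> 'b::finite) set). f y) = (\<Sum>a\<in>UNIV. \<Sum>b\<in>UNIV. f (a, b))"
  by (simp add: sum.cartesian_product)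

lemma clsym_coeffs_swap:
  assumes "clsym_coeffs s V"
  shows "V$C$j$i = clsgn s C C * V$C$i$j"
proof -
  have "transpose (V $ C) $ i $ j = (clsgn s C C *\<^sub>R V $ C) $ i $ j"
    using assms unfolding clsym_coeffs_def by simp
  then show ?thesis by (simp add: transpose_def)
qed

lemma clsym_coeffs_cl_one: "clsym_coeffs s cl_one"
  by (simp add: clsym_coeffs_def cl_one_def transpose_def vec_eq_iff)

lemma clsym_coeffs_diff:
  assumes "clsym_coeffs s x" "clsym_coeffs s y"
  shows "clsym_coeffs s (x - y)"
proof -
  have "transpose ((x - y) $ C) = transpose (x $ C) - transpose (y $ C)" for C
    by (simp add: transpose_def vec_eq_iff)
  with assms show ?thesis
    by (simp add: clsym_coeffs_def scaleR_diff_right)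
qed

lemma clsym_coeffs_scaleR: "clsym_coeffs s x \<Longrightarrow> clsym_coeffs s (c *\<^sub>R x)"
  by (simp add: clsym_coeffs_def transpose_scalar)

lemma det_nonzero_matrix_inv:
  fixes Q :: "real^'k::finite^'k"
  assumes "det Q \<noteq> 0"
  shows "Q ** matrix_inv Q = mat 1" "matrix_inv Q ** Q = mat 1"
proof -
  have "\<exists>Q'. Q ** Q' = mat 1 \<and> Q' ** Q = mat 1"
    using assms invertible_det_nz[of Q] unfolding invertible_def by blast
  then have "Q ** matrix_inv Q = mat 1 \<and> matrix_inv Q ** Q = mat 1"
    unfolding matrix_inv_def by (rule someI_ex)
  then show "Q ** matrix_inv Q = mat 1" "matrix_inv Q ** Q = mat 1" by auto
qed

context clifford_signs
begin

lemma cl_block_matrix_mult: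
  "cl_block_matrix s W ** cl_block_matrix s V = cl_block_matrix s (cl_mult s W V)"
proof -
  have "(cl_block_matrix s W ** cl_block_matrix s V) $ (A0,k) $ (B0,l)
      = cl_block_matrix s (cl_mult s W V) $ (A0,k) $ (B0,l)" for A0 B0 k l
  proof -
    have e: "symd (symd A0 A) B0 = symd A (symd A0 B0)" for A
      by (auto simp: symd_def)
    have sg: "clsgn s A (symd A0 A) * clsgn s (symd A (symd A0 B0)) B0
        = clsgn s (symd A0 B0) B0 * clsgn s A (symd A (symd A0 B0))" for A
      by (simp add: clsgn_simps mult_ac)
    have "(cl_block_matrix s W ** cl_block_matrix s V) $ (A0,k) $ (B0,l)
       = (\<Sum>D\<in>UNIV. \<Sum>r\<in>UNIV. clsgn s (symd A0 D) D * W$(symd A0 D)$k$r *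
              (clsgn s (symd D B0) B0 * V$(symd D B0)$r$l))"
      by (simp add: matrix_matrix_mult_def cl_block_matrix_nth sum_prod_UNIV)
    also have "\<dots> = (\<Sum>A\<in>UNIV. \<Sum>r\<in>UNIV. (clsgn s A (symd A0 A) * clsgn s (symd A (symd A0 B0)) B0)
        * W$A$k$r * V$(symd A (symd A0 B0))$r$l)"
      by (subst sum_symd_reindex[of _ A0]) (simp add: e mult_ac)
    also have "\<dots> = cl_block_matrix s (cl_mult s W V) $ (A0,k) $ (B0,l)"
      unfolding sg by (simp add: cl_block_matrix_nth cl_mult_def sum_distrib_left mult_ac)
    finally show ?thesis .
  qed
  then show ?thesis by (simp add: vec_eq_iff)
qed

lemma transpose_cl_block_matrix:
  assumes "clsym_coeffs s m"
  shows "transpose (cl_block_matrix s m) = cl_block_matrix s m"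
proof -
  have "transpose (cl_block_matrix s m) $ (A,k) $ (B,l) = cl_block_matrix s m $ (A,k) $ (B,l)" for A B k l
  proof -
    have "transpose (cl_block_matrix s m) $ (A,k) $ (B,l) = clsgn s (symd A B) A * m $ symd A B $ l $ k"
      by (simp add: transpose_def cl_block_matrix_nth symd_commute[of B A])
    also have "\<dots> = clsgn s (symd A B) A * clsgn s (symd A B) (symd A B) * m $ symd A B $ k $ l"
      by (simp add: clsym_coeffs_swap[OF assms, of "symd A B" l k])
    also have "clsgn s (symd A B) A * clsgn s (symd A B) (symd A B) = clsgn s (symd A B) B"
      using clsgn_symd_right[of "symd A B" A "symd A B"] by simp
    finally show ?thesis
      by (simp add: cl_block_matrix_nth)
  qed
  then show ?thesis
    by (simp add: vec_eq_iff)
qed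

lemma matrix_inv_cl_block_matrix:
  assumes symW: "clsym_coeffs s W" and det: "det (cl_block_matrix s W) \<noteq> 0"
  defines "U \<equiv> matrix_inv (cl_block_matrix s W)"
  shows "U = cl_block_matrix s (cl_coeffs U)" "clsym_coeffs s (cl_coeffs U)"
proof -
  define Q where "Q = cl_block_matrix s W"
  have QU: "Q ** U = mat 1" and UQ: "U ** Q = mat 1"
    using det_nonzero_matrix_inv[OF det] by (simp_all add: Q_def U_def)
  have "cl_mult s W (cl_coeffs U) $ C $ i $ j = cl_one $ C $ i $ j" for C i j
  proof -
    have "cl_mult s W (cl_coeffs U) $ C $ i $ j
        = (Q ** cl_block_matrix s (cl_coeffs U)) $ (C,i) $ ({},j)"
      by (simp add: Q_def cl_block_matrix_mult cl_block_matrix_nth)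
    also have "\<dots> = (Q ** U) $ (C,i) $ ({},j)"
      by (simp add: matrix_matrix_mult_def cl_block_matrix_nth cl_coeffs_def)
    finally show ?thesis by (simp add: QU mat_def cl_one_def)
  qed
  then have "cl_mult s W (cl_coeffs U) = cl_one"
    by (simp add: vec_eq_iff)
  then have "Q ** cl_block_matrix s (cl_coeffs U) = mat 1"
    by (simp add: Q_def cl_block_matrix_mult cl_block_matrix_cl_one)
  then have "(U ** Q) ** cl_block_matrix s (cl_coeffs U) = U"
    by (simp add: matrix_mul_assoc[symmetric])
  then show UV: "U = cl_block_matrix s (cl_coeffs U)"
    by (simp add: UQ)
  have "transpose U ** Q = mat 1"
    using arg_cong[OF QU, of transpose] transpose_cl_block_matrix[OF symW]
    by (simp add: matrix_transpose_mul Q_def)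
  then have "transpose U = U"
    using matrix_mul_assoc[of "transpose U" Q U] by (simp add: QU)
  then have "U $ (C,j) $ ({},i) = U $ ({},i) $ (C,j)" for C i j
  proof -
    have "transpose U $ ({},i) $ (C,j) = U $ ({},i) $ (C,j)"
      using \<open>transpose U = U\<close> by simp
    then show ?thesis by (simp add: transpose_def)
  qed
  show "clsym_coeffs s (cl_coeffs U)"
    unfolding clsym_coeffs_def vec_eq_iff
  proof (intro allI)
    fix C i j
    have "U $ ({},i) $ (C,j) = cl_block_matrix s (cl_coeffs U) $ ({},i) $ (C,j)"
      using arg_cong[OF UV, of "\<lambda>M. M $ ({},i) $ (C,j)"] by simp
    then show "transpose (cl_coeffs U $ C) $ i $ j = (clsgn s C C *\<^sub>R cl_coeffs U $ C) $ i $ j"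
      using \<open>U $ (C,j) $ ({},i) = U $ ({},i) $ (C,j)\<close>
      by (simp add: transpose_def cl_coeffs_def cl_block_matrix_nth)
  qed
qed

end

section \<open>Directional derivatives of the determinant\<close>

text \<open>The derivatives of \<open>u \<mapsto> det (M + u E)\<close> and of \<open>t \<mapsto> det_deriv (M + t E) E'\<close> at \<open>0\<close>,
  written out from the Leibniz formula.\<close>
definition det_deriv :: "real^'k::finite^'k \<Rightarrow> real^'k^'k \<Rightarrow> real" where
  "det_deriv M E = (\<Sum>p | p permutes (UNIV::'k set). of_int (sign p) *
      (\<Sum>i\<in>UNIV. E$i$p i * (\<Prod>j\<in>UNIV-{i}. M$j$p j)))"

definition det_deriv2 :: "real^'k::finite^'k \<Rightarrow> real^'k^'k \<Rightarrow> real^'k^'k \<Rightarrow> real" where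
  "det_deriv2 M E E' = (\<Sum>p | p permutes (UNIV::'k set). of_int (sign p) *
      (\<Sum>i\<in>UNIV. E'$i$p i * (\<Sum>j\<in>UNIV-{i}. E$j$p j * (\<Prod>k\<in>UNIV-{i}-{j}. M$k$p k))))"

lemma has_real_derivative_prod_line:
  "((\<lambda>u. \<Prod>i\<in>S. a i + u * b i) has_real_derivative (\<Sum>i\<in>S. b i * (\<Prod>j\<in>S-{i}. a j))) (at 0)"
proof -
  have "((\<lambda>u. a i + u * b i) has_real_derivative b i) (at 0)" for i
    by (auto intro!: derivative_eq_intros)
  then show ?thesis
    using has_field_derivative_prod[of S "\<lambda>i u. a i + u * b i" b 0] by simp
qed

lemma has_real_derivative_det_line:
  "((\<lambda>u. det (M + u *\<^sub>R E)) has_real_derivative det_deriv M E) (at 0)"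
  unfolding det_def det_deriv_def
  by (simp, intro DERIV_sum DERIV_cmult has_real_derivative_prod_line)

lemma has_real_derivative_det_deriv_line:
  "((\<lambda>t. det_deriv (M + t *\<^sub>R E) E') has_real_derivative det_deriv2 M E E') (at 0)"
  unfolding det_deriv_def det_deriv2_def
  by (simp, intro DERIV_sum DERIV_cmult has_real_derivative_prod_line)

lemma det_deriv_mult_left: "det_deriv (Q ** M) (Q ** E) = det Q * det_deriv M E"
proof -
  have "det (Q ** M + u *\<^sub>R (Q ** E)) = det Q * det (M + u *\<^sub>R E)" for u
    by (simp add: det_mul[symmetric] matrix_add_ldistrib matrix_scalar_ac scalar_matrix_assoc)
  then have "((\<lambda>u. det (Q ** M + u *\<^sub>R (Q ** E))) has_real_derivative det Q * det_deriv M E) (at 0)"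
    by (simp add: DERIV_cmult has_real_derivative_det_line)
  then show ?thesis
    using has_real_derivative_det_line DERIV_unique by blast
qed

lemma det_deriv2_mult_left: "det_deriv2 (Q ** M) (Q ** E) (Q ** E') = det Q * det_deriv2 M E E'"
proof -
  have "det_deriv (Q ** M + t *\<^sub>R (Q ** E)) (Q ** E') = det Q * det_deriv (M + t *\<^sub>R E) E'" for t
    by (simp add: det_deriv_mult_left[symmetric] matrix_add_ldistrib matrix_scalar_ac scalar_matrix_assoc)
  then have "((\<lambda>t. det_deriv (Q ** M + t *\<^sub>R (Q ** E)) (Q ** E')) has_real_derivative
      det Q * det_deriv2 M E E') (at 0)"
    by (simp add: DERIV_cmult has_real_derivative_det_deriv_line)
  then show ?thesis
    using has_real_derivative_det_deriv_line DERIV_unique by blast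
qed

lemma sum_permutations_supported:
  assumes "\<And>p. p permutes (UNIV::'k::finite set) \<Longrightarrow> \<not> p permutes S \<Longrightarrow> g p = (0::real)"
  shows "(\<Sum>p | p permutes (UNIV::'k set). g p) = (\<Sum>p | p permutes S. g p)"
  by (rule sum.mono_neutral_right) (auto simp: finite_permutations assms permutes_subset)

lemma prod_mat_1_permutation:
  assumes "p permutes (UNIV::'k::finite set)" "\<not> p permutes S"
  shows "(\<Prod>k\<in>UNIV-S. (mat 1 :: real^'k^'k) $ k $ p k) = 0"
proof -
  obtain k where "k \<notin> S" "p k \<noteq> k"
    using permutes_superset[OF assms(1), of S] assms(2) by blast
  then show ?thesis
    by (intro prod_zero bexI[of _ k]) (auto simp: mat_def)
qed

lemma permutes_doubleton: "{p. p permutes {a, b}} = {id, Transposition.transpose a b}"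
proof -
  have "{p. p permutes {a, b}} = (\<lambda>c. Transposition.transpose a c) ` {a, b}"
    by (auto simp: permutes_insert image_iff transpose_eq_id_iff)
  then show ?thesis by auto
qed

lemma det_deriv_mat_1: "det_deriv (mat 1) K = trace (K :: real^'k::finite^'k)"
proof -
  have "(\<Sum>p | p permutes (UNIV::'k set). of_int (sign p) *
      (K$i$p i * (\<Prod>j\<in>UNIV-{i}. (mat 1 :: real^'k^'k)$j$p j))) = K$i$i" for i
  proof (subst sum_permutations_supported[of "{i}"])
    show "of_int (sign p) * (K$i$p i * (\<Prod>j\<in>UNIV-{i}. (mat 1 :: real^'k^'k)$j$p j)) = 0"
      if "p permutes UNIV" "\<not> p permutes {i}" for p
      using prod_mat_1_permutation[OF that] by simp
  qed (simp add: mat_def)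
  then show ?thesis
    unfolding det_deriv_def trace_def sum_distrib_left by (subst sum.swap) simp
qed

lemma det_deriv2_mat_1:
  "det_deriv2 (mat 1) K K' = trace K * trace K' - trace (K ** (K' :: real^'k::finite^'k))"
proof -
  have "(\<Sum>p | p permutes (UNIV::'k set). of_int (sign p) *
      (K'$i$p i * (K$j$p j * (\<Prod>k\<in>UNIV-{i}-{j}. (mat 1 :: real^'k^'k)$k$p k))))
    = K'$i$i * K$j$j - K'$i$j * K$j$i" if "i \<noteq> j" for i j
  proof -
    have ij: "UNIV - {i} - {j} = UNIV - {i, j}" by auto
    show ?thesis unfolding ij
    proof (subst sum_permutations_supported[of "{i, j}"])
      show "of_int (sign p) * (K'$i$p i * (K$j$p j * (\<Prod>k\<in>UNIV-{i, j}. (mat 1 :: real^'k^'k)$k$p k))) = 0"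
        if "p permutes UNIV" "\<not> p permutes {i, j}" for p
        using prod_mat_1_permutation[OF that] by simp
    qed (use that in \<open>simp add: permutes_doubleton sign_swap_id mat_def eq_commute[of id] transpose_eq_id_iff\<close>)
  qed
  note pair = this
  have "det_deriv2 (mat 1) K K' = (\<Sum>i\<in>UNIV. \<Sum>j\<in>UNIV-{i}. \<Sum>p | p permutes (UNIV::'k set).
      of_int (sign p) * (K'$i$p i * (K$j$p j * (\<Prod>k\<in>UNIV-{i}-{j}. (mat 1 :: real^'k^'k)$k$p k))))"
    unfolding det_deriv2_def sum_distrib_left
    by (subst sum.swap, rule sum.cong[OF refl], rule sum.swap)
  also have "\<dots> = (\<Sum>i\<in>UNIV. \<Sum>j\<in>UNIV-{i}. K'$i$i * K$j$j - K'$i$j * K$j$i)"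
    by (intro sum.cong refl) (auto simp: pair)
  also have "\<dots> = (\<Sum>i\<in>UNIV. \<Sum>j\<in>UNIV. K'$i$i * K$j$j - K'$i$j * K$j$i)"
    by (rule sum.cong[OF refl]) (simp add: sum_diff1)
  also have "\<dots> = trace K * trace K' - trace (K ** K')"
    by (simp add: trace_def matrix_matrix_mult_def sum_subtractf sum_distrib_left
        sum_distrib_right mult.commute trace_mul_sym[of K])
       (rule sum.swap)
  finally show ?thesis .
qed

lemma det_deriv_inverse:
  assumes "Q ** U = mat 1"
  shows "det_deriv Q E = det Q * trace (U ** E)"
  using det_deriv_mult_left[of Q "mat 1" "U ** E"]
  by (simp add: matrix_mul_assoc assms det_deriv_mat_1)

lemma det_deriv2_inverse:
  assumes "Q ** U = mat 1"
  shows "det_deriv2 Q E E' = det Q * (trace (U ** E) * trace (U ** E') - trace ((U ** E) ** (U ** E')))"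
  using det_deriv2_mult_left[of Q "mat 1" "U ** E" "U ** E'"]
  by (simp add: matrix_mul_assoc assms det_deriv2_mat_1)

lemma has_real_derivative_ln_abs:
  assumes "x \<noteq> (0::real)"
  shows "((\<lambda>y. ln \<bar>y\<bar>) has_real_derivative 1 / x) (at x)"
proof (cases "x > 0")
  case True
  have ev: "\<forall>\<^sub>F y in nhds x. ln \<bar>y\<bar> = ln y"
    using eventually_nhds_in_open[of "{0<..}" x] True by (auto elim!: eventually_mono)
  show ?thesis
    using DERIV_ln_divide[OF True] DERIV_cong_ev[OF refl ev refl] by simp
next
  case False
  then have "x < 0" using assms by simp
  then have ev: "\<forall>\<^sub>F y in nhds x. ln \<bar>y\<bar> = ln (- y)"
    using eventually_nhds_in_open[of "{..<0}" x] by (auto elim!: eventually_mono)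
  have "((\<lambda>y. ln (- y)) has_real_derivative 1 / (- x) * (- 1)) (at x)"
    by (rule DERIV_chain2[OF DERIV_ln_divide]) (use \<open>x < 0\<close> in \<open>auto intro!: derivative_eq_intros\<close>)
  then show ?thesis
    using DERIV_cong_ev[OF refl ev refl] by simp
qed

lemma eventually_det_line_nonzero:
  fixes M E :: "real^'k::finite^'k"
  assumes "det M \<noteq> 0"
  shows "\<forall>\<^sub>F t in nhds 0. det (M + t *\<^sub>R E) \<noteq> 0"
proof -
  have "((\<lambda>t. det (M + t *\<^sub>R E)) \<longlongrightarrow> det M) (at 0)"
    using DERIV_isCont[OF has_real_derivative_det_line[of M E]] by (simp add: isCont_def)
  then have "\<forall>\<^sub>F t in at 0. det (M + t *\<^sub>R E) \<noteq> 0"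
    using assms by (rule tendsto_imp_eventually_ne)
  then show ?thesis
    using assms by (simp add: eventually_nhds_conv_at)
qed

lemma has_real_derivative_ln_abs_det_line:
  assumes "det M \<noteq> 0"
  shows "((\<lambda>u. ln \<bar>det (M + u *\<^sub>R E)\<bar>) has_real_derivative det_deriv M E / det M) (at 0)"
  using DERIV_chain2[OF has_real_derivative_ln_abs has_real_derivative_det_line, of M E] assms
  by simp

section \<open>Traces of Clifford block matrices\<close>

abbreviation cl_coord :: "('e \<Rightarrow> 'e \<Rightarrow> real) \<Rightarrow> 'e::finite set \<Rightarrow> 'n::finite \<Rightarrow> 'n \<Rightarrow>
    real^('e set \<times> 'n)^('e set \<times> 'n)" where
  "cl_coord s C i j \<equiv> cl_block_matrix s (coord C i j)"

lemma sum_mult_if_eq: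
  "(\<Sum>y\<in>UNIV. f y * (if y = a then c else 0)) = f (a::'a::finite) * (c::real)"
proof -
  have "f y * (if y = a then c else 0) = (if y = a then f a * c else 0)" for y
    by simp
  then show ?thesis
    by simp
qed

lemma sum_if_mult_eq:
  "(\<Sum>y\<in>UNIV. (if y = a then c else 0) * f y) = (c::real) * f (a::'a::finite)"
  using sum_mult_if_eq[of f a c] by (simp add: mult.commute)

lemma sum_swap3:
  "(\<Sum>x\<in>A. \<Sum>y\<in>B. \<Sum>z\<in>C. f x y z) = (\<Sum>z\<in>C. \<Sum>x\<in>A. \<Sum>y\<in>B. f x y z)"
proof -
  have "(\<Sum>x\<in>A. \<Sum>y\<in>B. \<Sum>z\<in>C. f x y z) = (\<Sum>x\<in>A. \<Sum>z\<in>C. \<Sum>y\<in>B. f x y z)"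
    by (rule sum.cong[OF refl], rule sum.swap)
  also have "\<dots> = (\<Sum>z\<in>C. \<Sum>x\<in>A. \<Sum>y\<in>B. f x y z)"
    by (rule sum.swap)
  finally show ?thesis .
qed

lemma matrix_mult_cl_coord_nth:
  "(M ** cl_coord s C i j) $ x $ (B, l) = (if l = j then clsgn s C B * M $ x $ (symd C B, i) else 0)"
proof -
  have "cl_coord s C i j $ (A, r) $ (B, l)
      = (if r = i then (if A = symd C B then (if l = j then clsgn s C B else 0) else 0) else 0)" for A r
    by (auto simp: cl_block_matrix_nth coord_def symd_eq_iff)
  then show ?thesis
    unfolding matrix_matrix_mult_def sum_prod_UNIV
    by (simp only: vec_lambda_beta sum_mult_if_eq) simp
qed

lemma trace_prod_index:
  "trace (M :: real^('a::finite \<times> 'b::finite)^('a \<times> 'b)) = (\<Sum>A\<in>UNIV. \<Sum>k\<in>UNIV. M $ (A,k) $ (A,k))"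
  by (simp add: trace_def sum_prod_UNIV)

lemma trace_matrix_mult_prod_index:
  "trace ((M :: real^('a::finite \<times> 'b::finite)^('a \<times> 'b)) ** N) =
    (\<Sum>A\<in>UNIV. \<Sum>k\<in>UNIV. \<Sum>B\<in>UNIV. \<Sum>l\<in>UNIV. M $ (A,k) $ (B,l) * N $ (B,l) $ (A,k))"
  by (simp add: trace_def sum_prod_UNIV matrix_matrix_mult_def)

lemma trace_matrix_mult_cl_coord_mult:
  "trace ((M ** cl_coord s C i j) ** (M ** cl_coord s C k l)) =
    (\<Sum>A\<in>UNIV. \<Sum>B\<in>UNIV. clsgn s C B * clsgn s C A * (M$(A,l)$(symd C B,i) * M$(B,j)$(symd C A,k)))"
proof -
  have "trace ((M ** cl_coord s C i j) ** (M ** cl_coord s C k l))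
      = (\<Sum>A\<in>UNIV. \<Sum>k'\<in>UNIV. \<Sum>B\<in>UNIV. (clsgn s C B * M$(A,k')$(symd C B,i)) *
          (if k' = l then clsgn s C A * M$(B,j)$(symd C A,k) else 0))"
    unfolding trace_matrix_mult_prod_index matrix_mult_cl_coord_nth by (simp only: sum_if_mult_eq)
  also have "\<dots> = (\<Sum>A\<in>UNIV. \<Sum>B\<in>UNIV. \<Sum>k'\<in>UNIV. (clsgn s C B * M$(A,k')$(symd C B,i)) *
          (if k' = l then clsgn s C A * M$(B,j)$(symd C A,k) else 0))"
    by (rule sum.cong[OF refl], rule sum.swap)
  finally show ?thesis
    by (simp only: sum_mult_if_eq) (simp add: mult_ac)
qed

lemma sum_gam_coord:
  fixes i j :: "'n::finite"
  shows "(\<Sum>k\<in>UNIV. \<Sum>l\<in>UNIV. gam_coord s C i j k l * F k l) = (F i j + clsgn s C C * F j i) / (2::real)"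
proof -
  have "gam_coord s C i j k l * F k l
      = (if l = j then (if k = i then F i j / 2 else 0) else 0)
        + (if l = i then (if k = j then clsgn s C C * F j i / 2 else 0) else 0)" for k l
    by (auto simp: gam_coord_def field_simps)
  then show ?thesis
    by (simp add: sum.distrib add_divide_distrib)
qed

context clifford_signs
begin

lemma trace_cl_block_matrix_mult_cl_coord:
  assumes "clsym_coeffs s V"
  shows "trace (cl_block_matrix s V ** cl_coord s C i j) = 2 ^ CARD('e) * V$C$i$j"
proof -
  have "clsgn s C B * cl_block_matrix s V $ (B,j) $ (symd C B, i) = V$C$i$j" for B
    by (simp add: cl_block_matrix_nth clsym_coeffs_swap[OF assms, of C j i] clsgn_simps mult_ac)
  then show ?thesis
    by (simp add: trace_prod_index matrix_mult_cl_coord_nth)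
qed

lemma trace_cl_block_matrix_mult:
  assumes "clsym_coeffs s W"
  shows "trace (cl_block_matrix s V ** cl_block_matrix s W)
    = 2 ^ CARD('e) * (\<Sum>C\<in>UNIV. \<Sum>k\<in>UNIV. \<Sum>l\<in>UNIV. V$C$k$l * W$C$k$l)"
proof -
  have "cl_block_matrix s V $ (A,k) $ (symd A C,l) * cl_block_matrix s W $ (symd A C,l) $ (A,k)
      = V$C$k$l * W$C$k$l" for A C k l
    by (simp add: cl_block_matrix_nth symd_commute[of _ A] clsym_coeffs_swap[OF assms, of C l k]
        clsgn_simps mult_ac)
  then have blocks: "(\<Sum>B\<in>UNIV. cl_block_matrix s V $ (A,k) $ (B,l) * cl_block_matrix s W $ (B,l) $ (A,k))
      = (\<Sum>C\<in>UNIV. V$C$k$l * W$C$k$l)" for A k l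
    by (subst sum_symd_reindex[of _ A]) simp
  have "trace (cl_block_matrix s V ** cl_block_matrix s W)
      = (\<Sum>A\<in>UNIV. \<Sum>k\<in>UNIV. \<Sum>l\<in>UNIV. \<Sum>B\<in>UNIV.
          cl_block_matrix s V $ (A,k) $ (B,l) * cl_block_matrix s W $ (B,l) $ (A,k))"
    unfolding trace_matrix_mult_prod_index by (intro sum.cong refl) (rule sum.swap)
  also have "\<dots> = (\<Sum>A\<in>(UNIV::'e set set). \<Sum>C\<in>UNIV. \<Sum>k\<in>UNIV. \<Sum>l\<in>UNIV. V$C$k$l * W$C$k$l)"
    unfolding blocks by (intro sum.cong refl) (rule sum_swap3)
  finally show ?thesis
    by simp
qed

lemma trace_cl_coord_products:
  "trace ((cl_block_matrix s V ** cl_coord s C i j) ** (cl_block_matrix s V ** cl_coord s C k l))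
    = 2 ^ CARD('e) * (\<Sum>D\<in>UNIV. clsgn s (symd C D) (symd C D) * (V$D$l$i * V$D$j$k))"
proof -
  have "(\<Sum>B\<in>UNIV. clsgn s C B * clsgn s C A * (cl_block_matrix s V $ (A,l) $ (symd C B,i)
      * cl_block_matrix s V $ (B,j) $ (symd C A,k)))
    = (\<Sum>D\<in>UNIV. clsgn s (symd C D) (symd C D) * (V$D$l$i * V$D$j$k))" for A
  proof -
    have "symd C (symd (symd A C) D) = symd A D" "symd (symd (symd A C) D) (symd C A) = D" for D
      by (auto simp: symd_def)
    then show ?thesis
      by (subst sum_symd_reindex[of _ "symd A C"])
         (simp add: cl_block_matrix_nth clsgn_simps mult_ac)
  qed
  then show ?thesis
    by (simp add: trace_matrix_mult_cl_coord_mult)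
qed

text \<open>The weight \<open>(C\<Delta>D|C\<Delta>D) = (C|C)(C|D)(D|C)(D|D)\<close> summed over \<open>C\<close> produces both
  \<open>\<Sum>\<^sub>A (A|A)\<close> and, after multiplication by \<open>(C|C)\<close>, the factor \<open>(D|D) H(D)\<close>.\<close>
lemma sum_gam_coord_trace_products:
  assumes "clsym_coeffs s V"
  shows "(\<Sum>C\<in>UNIV. \<Sum>i\<in>UNIV. \<Sum>j\<in>UNIV. \<Sum>k\<in>UNIV. \<Sum>l\<in>UNIV. gam_coord s C i j k l *
      trace ((cl_block_matrix s V ** cl_coord s C i j) ** (cl_block_matrix s V ** cl_coord s C k l)))
    = (1/2) * (\<Sum>A\<in>UNIV. clsgn s A A) * trace (cl_block_matrix s V ** cl_block_matrix s V)
      + 2 ^ (CARD('e) - 1) * (\<Sum>C\<in>UNIV. clsgn s C C * (\<Sum>A\<in>UNIV. clsgn s A C * clsgn s C A)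
          * (trace (V$C))^2)"
proof -
  define w where "w C D = clsgn s (symd C D) (symd C D)" for C D
  define S where "S D = (\<Sum>i\<in>UNIV. \<Sum>j\<in>UNIV. V$D$j$i * V$D$j$i)" for D
  define T where "T D = (trace (V$D))^2" for D
  define c :: real where "c = 2 ^ CARD('e)"
  have T_eq: "T D = (\<Sum>i\<in>UNIV. \<Sum>j\<in>UNIV. V$D$i$i * V$D$j$j)" for D
    by (simp add: T_def trace_def power2_eq_square sum_product)
  have gam_Cij: "(\<Sum>k\<in>UNIV. \<Sum>l\<in>UNIV. gam_coord s C i j k l *
      trace ((cl_block_matrix s V ** cl_coord s C i j) ** (cl_block_matrix s V ** cl_coord s C k l)))
    = c / 2 * (\<Sum>D\<in>UNIV. w C D * (V$D$j$i * V$D$j$i + clsgn s C C * (V$D$i$i * V$D$j$j)))" for C i j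
    by (simp only: sum_gam_coord trace_cl_coord_products)
       (simp add: c_def w_def sum.distrib sum_distrib_left ring_distribs mult_ac)
  have gam_C: "(\<Sum>i\<in>UNIV. \<Sum>j\<in>UNIV. \<Sum>k\<in>UNIV. \<Sum>l\<in>UNIV. gam_coord s C i j k l *
      trace ((cl_block_matrix s V ** cl_coord s C i j) ** (cl_block_matrix s V ** cl_coord s C k l)))
    = c / 2 * (\<Sum>D\<in>UNIV. w C D * (S D + clsgn s C C * T D))" for C
  proof -
    have "(\<Sum>i\<in>UNIV. \<Sum>j\<in>UNIV. \<Sum>D\<in>UNIV. w C D * (V$D$j$i * V$D$j$i + clsgn s C C * (V$D$i$i * V$D$j$j)))
        = (\<Sum>D\<in>UNIV. \<Sum>i\<in>UNIV. \<Sum>j\<in>UNIV. w C D * (V$D$j$i * V$D$j$i + clsgn s C C * (V$D$i$i * V$D$j$j)))"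
      by (rule sum_swap3)
    also have "\<dots> = (\<Sum>D\<in>UNIV. w C D * (S D + clsgn s C C * T D))"
      by (simp add: S_def T_eq sum.distrib sum_distrib_left ring_distribs)
    finally have swapped: "(\<Sum>i\<in>UNIV. \<Sum>j\<in>UNIV. \<Sum>D\<in>UNIV.
        w C D * (V$D$j$i * V$D$j$i + clsgn s C C * (V$D$i$i * V$D$j$j)))
      = (\<Sum>D\<in>UNIV. w C D * (S D + clsgn s C C * T D))" .
    show ?thesis
      by (simp only: gam_Cij sum_distrib_left[symmetric] swapped)
  qed
  have w_sum: "(\<Sum>C\<in>UNIV. w C D) = (\<Sum>A\<in>UNIV. clsgn s A A)" for D
    by (simp add: w_def sum_symd_reindex[of "\<lambda>A. clsgn s A A" D] symd_commute)
  have w_sum_sign: "(\<Sum>C\<in>UNIV. w C D * clsgn s C C)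
      = clsgn s D D * (\<Sum>A\<in>UNIV. clsgn s A D * clsgn s D A)" for D
    by (simp add: w_def clsgn_simps sum_distrib_left mult_ac)
  have w_D: "(\<Sum>C\<in>UNIV. w C D * (S D + clsgn s C C * T D))
      = S D * (\<Sum>A\<in>UNIV. clsgn s A A) + T D * (clsgn s D D * (\<Sum>A\<in>UNIV. clsgn s A D * clsgn s D A))" for D
  proof -
    have "(\<Sum>C\<in>UNIV. w C D * (S D + clsgn s C C * T D))
        = S D * (\<Sum>C\<in>UNIV. w C D) + T D * (\<Sum>C\<in>UNIV. w C D * clsgn s C C)"
      by (simp add: ring_distribs sum.distrib sum_distrib_left mult_ac)
    then show ?thesis
      by (simp only: w_sum w_sum_sign)
  qed
  have swapped: "(\<Sum>C\<in>UNIV. \<Sum>D\<in>UNIV. w C D * (S D + clsgn s C C * T D))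
      = (\<Sum>D\<in>UNIV. S D * (\<Sum>A\<in>UNIV. clsgn s A A)
          + T D * (clsgn s D D * (\<Sum>A\<in>UNIV. clsgn s A D * clsgn s D A)))"
    by (subst sum.swap) (simp only: w_D)
  have trace_S: "c * (\<Sum>D\<in>UNIV. S D) = trace (cl_block_matrix s V ** cl_block_matrix s V)"
    unfolding trace_cl_block_matrix_mult[OF assms] c_def S_def
    by (simp add: sum.swap[of "\<lambda>i j. V $ _ $ j $ i * V $ _ $ j $ i"])
  have c_half: "c / 2 = 2 ^ (CARD('e) - 1)"
  proof -
    have "CARD('e) = Suc (CARD('e) - 1)"
      using finite_UNIV_card_ge_0[where 'a='e] by simp
    then have "(2::real) ^ CARD('e) = 2 * 2 ^ (CARD('e) - 1)"
      by (metis power_Suc)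
    then show ?thesis
      by (simp add: c_def)
  qed
  have "(\<Sum>C\<in>UNIV. \<Sum>i\<in>UNIV. \<Sum>j\<in>UNIV. \<Sum>k\<in>UNIV. \<Sum>l\<in>UNIV. gam_coord s C i j k l *
      trace ((cl_block_matrix s V ** cl_coord s C i j) ** (cl_block_matrix s V ** cl_coord s C k l)))
    = c / 2 * (\<Sum>C\<in>UNIV. \<Sum>D\<in>UNIV. w C D * (S D + clsgn s C C * T D))"
    by (simp only: gam_C sum_distrib_left[symmetric])
  also have "\<dots> = (1/2) * (\<Sum>A\<in>UNIV. clsgn s A A) * (c * (\<Sum>D\<in>UNIV. S D))
      + c / 2 * (\<Sum>D\<in>UNIV. clsgn s D D * (\<Sum>A\<in>UNIV. clsgn s A D * clsgn s D A) * T D)"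
    unfolding swapped
    by (simp add: sum.distrib sum_distrib_left sum_distrib_right ring_distribs mult_ac)
       (subst sum.swap, simp add: sum_divide_distrib)
  finally show ?thesis
    by (simp only: trace_S c_half T_def)
qed

lemma sum_gam_coord_clsym:
  assumes "clsym_coeffs s W"
  shows "(\<Sum>C\<in>UNIV. \<Sum>i\<in>UNIV. \<Sum>j\<in>UNIV. \<Sum>k\<in>UNIV. \<Sum>l\<in>UNIV. gam_coord s C i j k l * (V$C$i$j * W$C$k$l))
       = (\<Sum>C\<in>UNIV. \<Sum>i\<in>UNIV. \<Sum>j\<in>UNIV. V$C$i$j * W$C$i$j)"
proof -
  have "(V$C$i$j * W$C$i$j + clsgn s C C * (V$C$i$j * W$C$j$i)) / 2 = V$C$i$j * W$C$i$j" for C i j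
    by (simp add: clsym_coeffs_swap[OF assms, of C i j] mult_ac)
  then show ?thesis
    by (simp only: sum_gam_coord)
qed

end

section \<open>The operators \<open>L\<close> and \<open>\<Gamma>\<close> in coordinates\<close>

definition coord_twice_differentiable ::
    "(real^'n::finite^'n^('e::finite set) \<Rightarrow> real) \<Rightarrow> real^'n^'n^('e set) \<Rightarrow> bool" where
  "coord_twice_differentiable F m \<longleftrightarrow> (\<forall>C i j k l.
     (\<forall>\<^sub>F t in nhds 0. (\<lambda>u. F (m + t *\<^sub>R coord C i j + u *\<^sub>R coord C k l)) differentiable (at 0))
     \<and> (\<lambda>t. F (m + t *\<^sub>R coord C i j)) differentiable (at 0)
     \<and> (\<lambda>t. pd F C k l (m + t *\<^sub>R coord C i j)) differentiable (at 0))"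

lemma coord_twice_differentiableD:
  assumes "coord_twice_differentiable F m"
  shows "\<forall>\<^sub>F t in nhds 0. ((\<lambda>u. F (m + t *\<^sub>R coord C i j + u *\<^sub>R coord C k l))
           has_real_derivative pd F C k l (m + t *\<^sub>R coord C i j)) (at 0)"
    and "((\<lambda>t. F (m + t *\<^sub>R coord C i j)) has_real_derivative pd F C i j m) (at 0)"
    and "((\<lambda>t. pd F C k l (m + t *\<^sub>R coord C i j)) has_real_derivative pd (pd F C k l) C i j m) (at 0)"
  using assms unfolding coord_twice_differentiable_def
  by (auto simp: pd_def[of F] pd_def[of "pd F C k l"] DERIV_deriv_iff_real_differentiable[symmetric]
      add.assoc elim!: eventually_mono)

lemma has_real_derivative_deriv_mult:
  fixes \<phi> \<psi> :: "real \<Rightarrow> real \<Rightarrow> real"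
  assumes "\<forall>\<^sub>F t in nhds 0. (\<phi> t has_real_derivative \<phi>' t) (at 0)"
    and "\<forall>\<^sub>F t in nhds 0. (\<psi> t has_real_derivative \<psi>' t) (at 0)"
    and "((\<lambda>t. \<phi> t 0) has_real_derivative a) (at 0)" "((\<lambda>t. \<psi> t 0) has_real_derivative b) (at 0)"
    and "(\<phi>' has_real_derivative a') (at 0)" "(\<psi>' has_real_derivative b') (at 0)"
  shows "((\<lambda>t. deriv (\<lambda>u. \<phi> t u * \<psi> t u) 0) has_real_derivative
           \<phi> 0 0 * b' + \<psi> 0 0 * a' + a * \<psi>' 0 + b * \<phi>' 0) (at 0)"
proof -
  have ev: "\<forall>\<^sub>F t in nhds 0. deriv (\<lambda>u. \<phi> t u * \<psi> t u) 0 = \<phi>' t * \<psi> t 0 + \<psi>' t * \<phi> t 0"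
    using assms(1,2) by eventually_elim (intro DERIV_imp_deriv DERIV_mult)
  have "((\<lambda>t. \<phi>' t * \<psi> t 0 + \<psi>' t * \<phi> t 0) has_real_derivative
      \<phi> 0 0 * b' + \<psi> 0 0 * a' + a * \<psi>' 0 + b * \<phi>' 0) (at 0)"
    using DERIV_add[OF DERIV_mult[OF assms(5,4)] DERIV_mult[OF assms(6,3)]]
    by (simp add: algebra_simps)
  then show ?thesis
    using DERIV_cong_ev[OF refl ev refl] by simp
qed

lemma pd_pd_mult:
  assumes F: "coord_twice_differentiable F m" and G: "coord_twice_differentiable G m"
  shows "pd (pd (\<lambda>x. F x * G x) C k l) C i j m
    = F m * pd (pd G C k l) C i j m + G m * pd (pd F C k l) C i j m
      + pd F C i j m * pd G C k l m + pd G C i j m * pd F C k l m"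
proof -
  define \<phi> where "\<phi> = (\<lambda>t u. F (m + t *\<^sub>R coord C i j + u *\<^sub>R coord C k l))"
  define \<psi> where "\<psi> = (\<lambda>t u. G (m + t *\<^sub>R coord C i j + u *\<^sub>R coord C k l))"
  have "((\<lambda>t. deriv (\<lambda>u. \<phi> t u * \<psi> t u) 0) has_real_derivative
      \<phi> 0 0 * pd (pd G C k l) C i j m + \<psi> 0 0 * pd (pd F C k l) C i j m
      + pd F C i j m * pd G C k l (m + 0 *\<^sub>R coord C i j)
      + pd G C i j m * pd F C k l (m + 0 *\<^sub>R coord C i j)) (at 0)"
  proof (rule has_real_derivative_deriv_mult)
    show "\<forall>\<^sub>F t in nhds 0. (\<phi> t has_real_derivative pd F C k l (m + t *\<^sub>R coord C i j)) (at 0)"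
      "\<forall>\<^sub>F t in nhds 0. (\<psi> t has_real_derivative pd G C k l (m + t *\<^sub>R coord C i j)) (at 0)"
      unfolding \<phi>_def \<psi>_def using coord_twice_differentiableD(1) F G by blast+
    show "((\<lambda>t. \<phi> t 0) has_real_derivative pd F C i j m) (at 0)"
      "((\<lambda>t. \<psi> t 0) has_real_derivative pd G C i j m) (at 0)"
      unfolding \<phi>_def \<psi>_def using coord_twice_differentiableD(2) F G by simp_all
  qed (use coord_twice_differentiableD(3) F G in blast)+
  then show ?thesis
    unfolding pd_def[of "pd _ C k l"]
    by (simp add: pd_def[of "\<lambda>x. F x * G x"] DERIV_imp_deriv \<phi>_def \<psi>_def)
qed

lemma GammaCl_eq_sum:
  assumes "coord_twice_differentiable F m" and "coord_twice_differentiable G m"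
  shows "GammaCl s F G m = (\<Sum>C\<in>UNIV. \<Sum>i\<in>UNIV. \<Sum>j\<in>UNIV. \<Sum>k\<in>UNIV. \<Sum>l\<in>UNIV.
     gam_coord s C i j k l * (pd F C i j m * pd G C k l m + pd G C i j m * pd F C k l m)) / 2"
  by (simp add: GammaCl_def LCl_def pd_pd_mult[OF assms] sum.distrib sum_distrib_left
      distrib_left mult_ac)

section \<open>The characteristic polynomial as a function of the coordinates\<close>

lemma Pcl_line:
  "Pcl s (m + t *\<^sub>R c) X = det ((cl_block_matrix s m - X *\<^sub>R mat 1) + t *\<^sub>R cl_block_matrix s c)"
  by (simp add: Pcl_def cl_block_matrix_add cl_block_matrix_scaleR algebra_simps)

lemma Pcl_plane:
  "Pcl s (m + t *\<^sub>R c + u *\<^sub>R c') X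
    = det ((cl_block_matrix s m - X *\<^sub>R mat 1) + t *\<^sub>R cl_block_matrix s c + u *\<^sub>R cl_block_matrix s c')"
  by (simp add: Pcl_def cl_block_matrix_add cl_block_matrix_scaleR algebra_simps)

lemma cl_block_matrix_line:
  "cl_block_matrix s (m + t *\<^sub>R c) - X *\<^sub>R mat 1
    = (cl_block_matrix s m - X *\<^sub>R mat 1) + t *\<^sub>R cl_block_matrix s c"
  by (simp add: cl_block_matrix_add cl_block_matrix_scaleR algebra_simps)

lemma pd_Pcl:
  "pd (\<lambda>x. Pcl s x X) C k l m = det_deriv (cl_block_matrix s m - X *\<^sub>R mat 1) (cl_coord s C k l)"
  unfolding pd_def Pcl_line by (rule DERIV_imp_deriv[OF has_real_derivative_det_line])

lemma pd_Pcl_line: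
  "pd (\<lambda>x. Pcl s x X) C k l (m + t *\<^sub>R c)
    = det_deriv ((cl_block_matrix s m - X *\<^sub>R mat 1) + t *\<^sub>R cl_block_matrix s c) (cl_coord s C k l)"
  by (simp add: pd_Pcl cl_block_matrix_line)

lemma pd_pd_Pcl:
  "pd (pd (\<lambda>x. Pcl s x X) C k l) C i j m
    = det_deriv2 (cl_block_matrix s m - X *\<^sub>R mat 1) (cl_coord s C i j) (cl_coord s C k l)"
  unfolding pd_def[of "pd _ C k l"] pd_Pcl_line
  by (rule DERIV_imp_deriv[OF has_real_derivative_det_deriv_line])

lemma coord_twice_differentiable_Pcl: "coord_twice_differentiable (\<lambda>x. Pcl s x X) m"
  unfolding coord_twice_differentiable_def real_differentiable_def Pcl_plane
  unfolding Pcl_line pd_Pcl_line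
  using has_real_derivative_det_line has_real_derivative_det_deriv_line
  by (blast intro: always_eventually)

lemma pd_ln_Pcl:
  assumes "Pcl s m X \<noteq> 0"
  shows "pd (\<lambda>x. ln \<bar>Pcl s x X\<bar>) C i j m = pd (\<lambda>x. Pcl s x X) C i j m / Pcl s m X"
proof -
  have "det (cl_block_matrix s m - X *\<^sub>R mat 1) \<noteq> 0"
    using assms by (simp add: Pcl_def)
  then have "pd (\<lambda>x. ln \<bar>Pcl s x X\<bar>) C i j m
      = det_deriv (cl_block_matrix s m - X *\<^sub>R mat 1) (cl_coord s C i j) / det (cl_block_matrix s m - X *\<^sub>R mat 1)"
    unfolding pd_def Pcl_line by (rule DERIV_imp_deriv[OF has_real_derivative_ln_abs_det_line])
  then show ?thesis
    unfolding pd_Pcl by (simp add: Pcl_def)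
qed

lemma coord_twice_differentiable_ln_Pcl:
  assumes "Pcl s m X \<noteq> 0"
  shows "coord_twice_differentiable (\<lambda>x. ln \<bar>Pcl s x X\<bar>) m"
  unfolding coord_twice_differentiable_def
proof (intro allI conjI)
  fix C :: "'a set" and i j k l :: 'b
  define Q where "Q = cl_block_matrix s m - X *\<^sub>R mat 1"
  define E where "E = cl_coord s C i j"
  define E' where "E' = cl_coord s C k l"
  have Q: "det Q \<noteq> 0"
    using assms by (simp add: Q_def Pcl_def)
  have line: "Pcl s (m + t *\<^sub>R coord C i j + u *\<^sub>R coord C k l) X = det ((Q + t *\<^sub>R E) + u *\<^sub>R E')" for t u
    using Pcl_line[of s "m + t *\<^sub>R coord C i j"] by (simp add: cl_block_matrix_line Q_def E_def E'_def)
  have ev: "\<forall>\<^sub>F t in nhds 0. det (Q + t *\<^sub>R E) \<noteq> 0"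
    by (rule eventually_det_line_nonzero[OF Q])
  then show "\<forall>\<^sub>F t in nhds 0. (\<lambda>u. ln \<bar>Pcl s (m + t *\<^sub>R coord C i j + u *\<^sub>R coord C k l) X\<bar>)
      differentiable (at 0)"
    unfolding line real_differentiable_def
    by eventually_elim (blast intro: has_real_derivative_ln_abs_det_line)
  show "(\<lambda>t. ln \<bar>Pcl s (m + t *\<^sub>R coord C i j) X\<bar>) differentiable (at 0)"
    unfolding Pcl_line real_differentiable_def
    using has_real_derivative_ln_abs_det_line[OF Q] by (auto simp: Q_def)
  have ev_pd: "\<forall>\<^sub>F t in nhds 0. pd (\<lambda>x. ln \<bar>Pcl s x X\<bar>) C k l (m + t *\<^sub>R coord C i j)
      = det_deriv (Q + t *\<^sub>R E) E' / det (Q + t *\<^sub>R E)"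
    using ev by eventually_elim
      (simp add: pd_def line[of _ 0, simplified, symmetric] line
        DERIV_imp_deriv[OF has_real_derivative_ln_abs_det_line])
  moreover have "((\<lambda>t. det_deriv (Q + t *\<^sub>R E) E' / det (Q + t *\<^sub>R E)) has_real_derivative
      (det_deriv2 Q E E' * det Q - det_deriv Q E' * det_deriv Q E) / (det Q * det Q)) (at 0)"
    using DERIV_divide[OF has_real_derivative_det_deriv_line has_real_derivative_det_line] Q by simp
  ultimately show "(\<lambda>t. pd (\<lambda>x. ln \<bar>Pcl s x X\<bar>) C k l (m + t *\<^sub>R coord C i j)) differentiable (at 0)"
    unfolding real_differentiable_def using DERIV_cong_ev[OF refl ev_pd refl] by blast
qed

section \<open>The characteristic polynomial as a function of \<open>X\<close>\<close>

lemma finite_det_minus_scaleR_zero: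
  fixes A :: "real^'k::finite^'k"
  assumes "det (A - X *\<^sub>R mat 1) \<noteq> 0"
  shows "finite {Y. det (A - Y *\<^sub>R mat 1) = 0}"
proof -
  define p where "p = (\<Sum>q | q permutes (UNIV::'k set). smult (of_int (sign q))
      (\<Prod>i\<in>UNIV. [:A$i$q i, - (mat 1 :: real^'k^'k)$i$q i:]))"
  have p: "det (A - Y *\<^sub>R mat 1) = poly p Y" for Y
    unfolding det_def p_def poly_sum by (simp add: poly_prod algebra_simps)
  then have "p \<noteq> 0"
    using assms by auto
  then show ?thesis
    unfolding p by (rule poly_roots_finite)
qed

lemma has_real_derivative_det_minus_scaleR:
  fixes A :: "real^'k::finite^'k"
  shows "((\<lambda>Y. det (A - Y *\<^sub>R mat 1)) has_real_derivative det_deriv (A - Z *\<^sub>R mat 1) (- mat 1)) (at Z)"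
proof -
  have "(\<lambda>u. det ((A - Z *\<^sub>R mat 1) + u *\<^sub>R (- mat 1))) = (\<lambda>u. det (A - (u + Z) *\<^sub>R mat 1))"
    by (simp add: algebra_simps)
  then show ?thesis
    using has_real_derivative_det_line[of "A - Z *\<^sub>R mat 1" "- mat 1"]
      DERIV_shift[of "\<lambda>Y. det (A - Y *\<^sub>R mat 1)" _ 0 Z]
    by simp
qed

lemma deriv_det_minus_scaleR:
  fixes A :: "real^'k::finite^'k"
  shows "deriv (\<lambda>Y. det (A - Y *\<^sub>R mat 1)) Z = det_deriv (A - Z *\<^sub>R mat 1) (- mat 1)"
  by (rule DERIV_imp_deriv[OF has_real_derivative_det_minus_scaleR])

lemma deriv2_det_minus_scaleR:
  fixes A :: "real^'k::finite^'k"
  shows "deriv (deriv (\<lambda>Y. det (A - Y *\<^sub>R mat 1))) X = det_deriv2 (A - X *\<^sub>R mat 1) (- mat 1) (- mat 1)"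
proof -
  have "(\<lambda>u. det_deriv ((A - X *\<^sub>R mat 1) + u *\<^sub>R (- mat 1)) (- mat 1))
      = (\<lambda>u. deriv (\<lambda>Y. det (A - Y *\<^sub>R mat 1)) (u + X))"
    by (simp add: deriv_det_minus_scaleR algebra_simps)
  then have "((\<lambda>u. deriv (\<lambda>Y. det (A - Y *\<^sub>R mat 1)) (u + X)) has_real_derivative
      det_deriv2 (A - X *\<^sub>R mat 1) (- mat 1) (- mat 1)) (at 0)"
    using has_real_derivative_det_deriv_line[of "A - X *\<^sub>R mat 1" "- mat 1" "- mat 1"] by simp
  then show ?thesis
    using DERIV_shift[of "deriv (\<lambda>Y. det (A - Y *\<^sub>R mat 1))" _ 0 X] by (simp add: DERIV_imp_deriv)
qed

lemma trace_uminus: "trace (- A) = - trace (A :: real^'k::finite^'k)"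
  by (simp add: trace_def sum_negf)

lemma trace_scaleR: "trace (c *\<^sub>R A) = c * trace (A :: real^'k::finite^'k)"
  by (simp add: trace_def sum_distrib_left)

lemma matrix_mult_uminus_right: "A ** (- B) = - (A ** (B :: real^'k::finite^'k))"
  by (simp add: matrix_matrix_mult_def vec_eq_iff sum_negf)

lemma matrix_add_rdistrib: "(A + B) ** C = A ** C + B ** (C :: real^'k::finite^'k)"
  by (simp add: matrix_matrix_mult_def vec_eq_iff sum.distrib ring_distribs)

lemma det_deriv_minus_mat_1:
  assumes "Q ** U = mat 1"
  shows "det_deriv Q (- mat 1) = - det Q * trace U"
  by (simp add: det_deriv_inverse[OF assms] matrix_mult_uminus_right trace_uminus)

lemma det_deriv2_minus_mat_1:
  assumes "Q ** U = mat 1"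
  shows "det_deriv2 Q (- mat 1) (- mat 1) = det Q * ((trace U)^2 - trace (U ** U))"
proof -
  have "(- U) ** (- U) = U ** U"
    by (simp add: matrix_matrix_mult_def vec_eq_iff sum_negf)
  then show ?thesis
    by (simp add: det_deriv2_inverse[OF assms] matrix_mult_uminus_right trace_uminus power2_eq_square)
qed

lemma trace_resolvent_square:
  fixes A :: "real^'k::finite^'k"
  assumes "det (A - X *\<^sub>R mat 1) \<noteq> 0"
  defines "P \<equiv> \<lambda>Y. det (A - Y *\<^sub>R mat 1)" and "U \<equiv> matrix_inv (A - X *\<^sub>R mat 1)"
  shows "trace (U ** U) = (deriv P X)^2 / (P X)^2 - deriv (deriv P) X / P X"
proof -
  have QU: "(A - X *\<^sub>R mat 1) ** U = mat 1"
    using det_nonzero_matrix_inv[OF assms(1)] by (simp add: U_def)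
  show ?thesis
    using assms(1)
    unfolding P_def deriv_det_minus_scaleR deriv2_det_minus_scaleR
      det_deriv_minus_mat_1[OF QU] det_deriv2_minus_mat_1[OF QU]
    by (simp add: field_simps power2_eq_square)
qed

lemma trace_resolvent_difference:
  fixes A :: "real^'k::finite^'k"
  assumes "det (A - X *\<^sub>R mat 1) \<noteq> 0" "det (A - Y *\<^sub>R mat 1) \<noteq> 0"
  defines "UX \<equiv> matrix_inv (A - X *\<^sub>R mat 1)" and "UY \<equiv> matrix_inv (A - Y *\<^sub>R mat 1)"
  shows "trace UY - trace UX = (Y - X) * trace (UX ** UY)"
proof -
  note X = det_nonzero_matrix_inv[OF assms(1), folded UX_def]
  note Y = det_nonzero_matrix_inv[OF assms(2), folded UY_def]
  have "UX ** (A - Y *\<^sub>R mat 1) = mat 1 + (X - Y) *\<^sub>R UX"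
  proof -
    have "UX ** (A - Y *\<^sub>R mat 1) = UX ** ((A - X *\<^sub>R mat 1) + (X - Y) *\<^sub>R mat 1)"
      by (simp add: algebra_simps)
    also have "\<dots> = mat 1 + (X - Y) *\<^sub>R UX"
      by (simp only: matrix_add_ldistrib X(2) matrix_scalar_ac matrix_mul_rid)
    finally show ?thesis .
  qed
  then have "UX = (mat 1 + (X - Y) *\<^sub>R UX) ** UY"
    by (metis Y(1) matrix_mul_assoc matrix_mul_rid)
  then have "UX = UY + (X - Y) *\<^sub>R (UX ** UY)"
    by (simp add: matrix_add_rdistrib scalar_matrix_assoc)
  then have "trace UX = trace UY + (X - Y) * trace (UX ** UY)"
    by (metis trace_add trace_scaleR)
  then show ?thesis
    by (simp add: algebra_simps)
qed

lemma isCont_det_minus_scaleR: "isCont (\<lambda>Y. det ((A::real^'k::finite^'k) - Y *\<^sub>R mat 1)) Y0"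
  unfolding det_def by (simp, intro continuous_intros)

lemma isCont_det_deriv_minus_scaleR: "isCont (\<lambda>Y. det_deriv (A - Y *\<^sub>R mat 1) E) Y0"
  unfolding det_deriv_def by (simp, intro continuous_intros)

lemma isCont_eq_off_finite:
  fixes f g :: "real \<Rightarrow> real"
  assumes "isCont f y" "isCont g y" "finite S" "\<And>z. z \<notin> S \<Longrightarrow> f z = g z"
  shows "f y = g y"
proof -
  have "\<forall>\<^sub>F z in at y. z \<notin> S"
    using islimpt_finite[OF assms(3)] by (simp add: islimpt_iff_eventually)
  then have "\<forall>\<^sub>F z in at y. g z = f z"
    by eventually_elim (simp add: assms(4))
  then have "(f \<longlongrightarrow> g y) (at y)"
    using assms(2) Lim_transform_eventually unfolding isCont_def by blast
  then show ?thesis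
    using assms(1) tendsto_unique[OF trivial_limit_at] unfolding isCont_def by blast
qed

section \<open>The identities for \<open>P(X) = det (\<M> - X Id)\<close>\<close>

lemma Pcl_eq_det: "Pcl s m = (\<lambda>Y. det (cl_block_matrix s m - Y *\<^sub>R mat 1))"
  by (simp add: Pcl_def fun_eq_iff)

lemma cl_block_matrix_minus_scaleR:
  "cl_block_matrix s m - X *\<^sub>R mat 1 = cl_block_matrix s (m - X *\<^sub>R cl_one)"
  by (simp add: cl_block_matrix_diff cl_block_matrix_scaleR cl_block_matrix_cl_one)

lemma deriv_Pcl:
  assumes "Pcl s m Z \<noteq> 0"
  shows "deriv (Pcl s m) Z = - Pcl s m Z * trace (matrix_inv (cl_block_matrix s m - Z *\<^sub>R mat 1))"
  using assms det_nonzero_matrix_inv(1)[of "cl_block_matrix s m - Z *\<^sub>R mat 1"]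
  by (simp add: Pcl_eq_det deriv_det_minus_scaleR det_deriv_minus_mat_1)

context clifford_signs
begin

lemma resolvent_cl_block_matrix:
  assumes "clsym_coeffs s m" "Pcl s m X \<noteq> 0"
  defines "U \<equiv> matrix_inv (cl_block_matrix s m - X *\<^sub>R mat 1)"
  shows "U = cl_block_matrix s (cl_coeffs U)" "clsym_coeffs s (cl_coeffs U)"
proof -
  have "clsym_coeffs s (m - X *\<^sub>R cl_one)"
    by (intro clsym_coeffs_diff clsym_coeffs_scaleR assms(1) clsym_coeffs_cl_one)
  moreover have "det (cl_block_matrix s (m - X *\<^sub>R cl_one)) \<noteq> 0"
    using assms(2) by (simp add: Pcl_def cl_block_matrix_minus_scaleR)
  ultimately show "U = cl_block_matrix s (cl_coeffs U)" "clsym_coeffs s (cl_coeffs U)"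
    using matrix_inv_cl_block_matrix unfolding U_def cl_block_matrix_minus_scaleR by blast+
qed

lemma pd_Pcl_resolvent:
  assumes "clsym_coeffs s m" "Pcl s m X \<noteq> 0"
  shows "pd (\<lambda>x. Pcl s x X) C i j m
    = Pcl s m X * 2 ^ CARD('e) * cl_coeffs (matrix_inv (cl_block_matrix s m - X *\<^sub>R mat 1)) $ C $ i $ j"
proof -
  define U where "U = matrix_inv (cl_block_matrix s m - X *\<^sub>R mat 1)"
  define V where "V = cl_coeffs U"
  have UV: "U = cl_block_matrix s V" and V: "clsym_coeffs s V"
    using resolvent_cl_block_matrix[OF assms] by (simp_all add: U_def V_def)
  have "(cl_block_matrix s m - X *\<^sub>R mat 1) ** U = mat 1"
    using det_nonzero_matrix_inv(1) assms(2) by (simp add: U_def Pcl_def)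
  then have "pd (\<lambda>x. Pcl s x X) C i j m = Pcl s m X * trace (U ** cl_coord s C i j)"
    unfolding pd_Pcl by (simp add: det_deriv_inverse Pcl_def)
  also have "trace (U ** cl_coord s C i j) = 2 ^ CARD('e) * V $ C $ i $ j"
    unfolding UV by (rule trace_cl_block_matrix_mult_cl_coord[OF V])
  finally show ?thesis
    by (simp add: U_def V_def mult.assoc)
qed

text \<open>At a second point \<open>Y\<close> that is not an eigenvalue, both sides reduce to
  \<open>2\<^sup>2\<^sup>p P(X) P(Y) \<Sum> U(X)\<^sup>C\<^sub>i\<^sub>j U(Y)\<^sup>C\<^sub>i\<^sub>j\<close>, by the resolvent identity.\<close>
lemma GammaCl_Pcl_Pcl_regular:
  assumes "clsym_coeffs s m" "Pcl s m X \<noteq> 0" "Pcl s m Y \<noteq> 0" "Y \<noteq> X"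
  shows "GammaCl s (\<lambda>x. Pcl s x X) (\<lambda>x. Pcl s x Y) m
    = 2 ^ CARD('e) / (Y - X) * (deriv (Pcl s m) X * Pcl s m Y - deriv (Pcl s m) Y * Pcl s m X)"
proof -
  define UX where "UX = matrix_inv (cl_block_matrix s m - X *\<^sub>R mat 1)"
  define UY where "UY = matrix_inv (cl_block_matrix s m - Y *\<^sub>R mat 1)"
  define VX where "VX = cl_coeffs UX"
  define VY where "VY = cl_coeffs UY"
  define c :: real where "c = 2 ^ CARD('e)"
  define SS where "SS = (\<Sum>C\<in>UNIV. \<Sum>i\<in>UNIV. \<Sum>j\<in>UNIV. VX$C$i$j * VY$C$i$j)"
  have UVX: "UX = cl_block_matrix s VX" and VX: "clsym_coeffs s VX"
    using resolvent_cl_block_matrix[OF assms(1,2)] by (simp_all add: UX_def VX_def)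
  have UVY: "UY = cl_block_matrix s VY" and VY: "clsym_coeffs s VY"
    using resolvent_cl_block_matrix[OF assms(1,3)] by (simp_all add: UY_def VY_def)
  have "(\<Sum>C\<in>UNIV. \<Sum>i\<in>UNIV. \<Sum>j\<in>UNIV. \<Sum>k\<in>UNIV. \<Sum>l\<in>UNIV. gam_coord s C i j k l *
      (pd (\<lambda>x. Pcl s x X) C i j m * pd (\<lambda>x. Pcl s x Y) C k l m
       + pd (\<lambda>x. Pcl s x Y) C i j m * pd (\<lambda>x. Pcl s x X) C k l m))
    = Pcl s m X * Pcl s m Y * c * c *
      ((\<Sum>C\<in>UNIV. \<Sum>i\<in>UNIV. \<Sum>j\<in>UNIV. \<Sum>k\<in>UNIV. \<Sum>l\<in>UNIV. gam_coord s C i j k l * (VX$C$i$j * VY$C$k$l))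
      + (\<Sum>C\<in>UNIV. \<Sum>i\<in>UNIV. \<Sum>j\<in>UNIV. \<Sum>k\<in>UNIV. \<Sum>l\<in>UNIV. gam_coord s C i j k l * (VY$C$i$j * VX$C$k$l)))"
    by (simp add: pd_Pcl_resolvent[OF assms(1,2)] pd_Pcl_resolvent[OF assms(1,3)] UX_def UY_def
        VX_def VY_def c_def sum_distrib_left sum.distrib distrib_left mult_ac)
  also have "\<dots> = Pcl s m X * Pcl s m Y * c * c * (2 * SS)"
    using sum_gam_coord_clsym[OF VY, of VX] sum_gam_coord_clsym[OF VX, of VY]
    by (simp add: SS_def mult.commute)
  finally have lhs: "GammaCl s (\<lambda>x. Pcl s x X) (\<lambda>x. Pcl s x Y) m = Pcl s m X * Pcl s m Y * c * c * SS"
    by (simp add: GammaCl_eq_sum coord_twice_differentiable_Pcl)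
  have "trace (UX ** UY) = c * SS"
    unfolding UVX UVY c_def SS_def by (rule trace_cl_block_matrix_mult[OF VY])
  moreover have "trace UY - trace UX = (Y - X) * trace (UX ** UY)"
    using assms(2,3) unfolding UX_def UY_def Pcl_def by (rule trace_resolvent_difference)
  moreover have "deriv (Pcl s m) X * Pcl s m Y - deriv (Pcl s m) Y * Pcl s m X
      = Pcl s m X * Pcl s m Y * (trace UY - trace UX)"
    by (simp add: deriv_Pcl assms(2,3) UX_def UY_def algebra_simps)
  ultimately show ?thesis
    using assms(4) by (simp add: lhs c_def)
qed

lemma GammaCl_Pcl_Pcl:
  assumes "clsym_coeffs s m" "Pcl s m X \<noteq> 0" "Y \<noteq> X"
  shows "GammaCl s (\<lambda>x. Pcl s x X) (\<lambda>x. Pcl s x Y) m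
    = 2 ^ CARD('e) / (Y - X) * (deriv (Pcl s m) X * Pcl s m Y - deriv (Pcl s m) Y * Pcl s m X)"
proof -
  define Q where "Q Z = cl_block_matrix s m - Z *\<^sub>R mat 1" for Z
  define L where "L Z = (\<Sum>C\<in>UNIV. \<Sum>i\<in>UNIV. \<Sum>j\<in>UNIV. \<Sum>k\<in>UNIV. \<Sum>l\<in>UNIV. gam_coord s C i j k l *
      (det_deriv (Q X) (cl_coord s C i j) * det_deriv (Q Z) (cl_coord s C k l)
       + det_deriv (Q Z) (cl_coord s C i j) * det_deriv (Q X) (cl_coord s C k l))) / 2" for Z
  define R where "R Z = 2 ^ CARD('e) / (Z - X) *
      (det_deriv (Q X) (- mat 1) * det (Q Z) - det_deriv (Q Z) (- mat 1) * det (Q X))" for Z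
  have L_eq: "GammaCl s (\<lambda>x. Pcl s x X) (\<lambda>x. Pcl s x Z) m = L Z" for Z
    by (simp add: GammaCl_eq_sum coord_twice_differentiable_Pcl pd_Pcl L_def Q_def)
  have R_eq: "2 ^ CARD('e) / (Z - X) * (deriv (Pcl s m) X * Pcl s m Z - deriv (Pcl s m) Z * Pcl s m X) = R Z" for Z
    by (simp add: R_def Q_def Pcl_eq_det deriv_det_minus_scaleR)
  have "isCont L Y"
    unfolding L_def Q_def by (intro continuous_intros isCont_det_deriv_minus_scaleR) simp
  moreover have "isCont R Y"
    unfolding R_def Q_def using assms(3)
    by (intro continuous_intros isCont_det_deriv_minus_scaleR isCont_det_minus_scaleR) simp
  moreover have "finite (insert X {Z. Pcl s m Z = 0})"
    using finite_det_minus_scaleR_zero assms(2) by (simp add: Pcl_def)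
  moreover have "L Z = R Z" if "Z \<notin> insert X {Z. Pcl s m Z = 0}" for Z
  proof -
    have "Pcl s m Z \<noteq> 0" "Z \<noteq> X"
      using that by auto
    from GammaCl_Pcl_Pcl_regular[OF assms(1,2) this] show ?thesis
      unfolding L_eq R_eq .
  qed
  ultimately have "L Y = R Y"
    by (rule isCont_eq_off_finite)
  then show ?thesis
    unfolding L_eq R_eq .
qed

text \<open>\<open>L P / P\<close> splits into \<open>\<Gamma>(log P, log P)\<close> and the \<open>\<Gamma>\<close>-contraction of \<open>trace (U E U E')\<close>.\<close>
lemma LCl_Pcl_div:
  assumes "clsym_coeffs s m" "Pcl s m X \<noteq> 0"
  defines "U \<equiv> matrix_inv (cl_block_matrix s m - X *\<^sub>R mat 1)"
  shows "LCl s (\<lambda>x. Pcl s x X) m / Pcl s m X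
    = GammaCl s (\<lambda>x. ln \<bar>Pcl s x X\<bar>) (\<lambda>x. ln \<bar>Pcl s x X\<bar>) m
      - (1/2) * (\<Sum>A\<in>UNIV. clsgn s A A) * trace (U ** U)
      - 2 ^ (CARD('e) - 1) * (\<Sum>C\<in>UNIV. clsgn s C C * (\<Sum>A\<in>UNIV. clsgn s A C * clsgn s C A)
          * (trace (cl_coeffs U $ C))^2)"
proof -
  define Q where "Q = cl_block_matrix s m - X *\<^sub>R mat 1"
  define V where "V = cl_coeffs U"
  define tr where "tr C i j = trace (U ** cl_coord s C i j)" for C i j
  define TT where "TT C i j k l = trace ((U ** cl_coord s C i j) ** (U ** cl_coord s C k l))" for C i j k l
  have UV: "U = cl_block_matrix s V" and V: "clsym_coeffs s V"
    using resolvent_cl_block_matrix[OF assms(1,2)] by (simp_all add: U_def V_def)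
  have P: "Pcl s m X = det Q"
    by (simp add: Q_def Pcl_def)
  have QU: "Q ** U = mat 1"
    using det_nonzero_matrix_inv(1) assms(2) by (simp add: U_def Q_def Pcl_def)
  have "LCl s (\<lambda>x. Pcl s x X) m = Pcl s m X *
      ((\<Sum>C\<in>UNIV. \<Sum>i\<in>UNIV. \<Sum>j\<in>UNIV. \<Sum>k\<in>UNIV. \<Sum>l\<in>UNIV. gam_coord s C i j k l * (tr C i j * tr C k l))
      - (\<Sum>C\<in>UNIV. \<Sum>i\<in>UNIV. \<Sum>j\<in>UNIV. \<Sum>k\<in>UNIV. \<Sum>l\<in>UNIV. gam_coord s C i j k l * TT C i j k l))"
    unfolding LCl_def pd_pd_Pcl Q_def[symmetric] det_deriv2_inverse[OF QU] P
    by (simp add: tr_def TT_def right_diff_distrib sum_subtractf sum_distrib_left mult_ac)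
  moreover have "GammaCl s (\<lambda>x. ln \<bar>Pcl s x X\<bar>) (\<lambda>x. ln \<bar>Pcl s x X\<bar>) m
      = (\<Sum>C\<in>UNIV. \<Sum>i\<in>UNIV. \<Sum>j\<in>UNIV. \<Sum>k\<in>UNIV. \<Sum>l\<in>UNIV. gam_coord s C i j k l * (tr C i j * tr C k l))"
  proof -
    have "pd (\<lambda>x. ln \<bar>Pcl s x X\<bar>) C i j m = tr C i j" for C i j
      using assms(2)
      by (simp add: pd_ln_Pcl pd_Pcl Q_def[symmetric] det_deriv_inverse[OF QU] P tr_def)
    then show ?thesis
      by (simp add: GammaCl_eq_sum coord_twice_differentiable_ln_Pcl[OF assms(2)] sum_divide_distrib)
  qed
  moreover have "(\<Sum>C\<in>UNIV. \<Sum>i\<in>UNIV. \<Sum>j\<in>UNIV. \<Sum>k\<in>UNIV. \<Sum>l\<in>UNIV. gam_coord s C i j k l * TT C i j k l)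
      = (1/2) * (\<Sum>A\<in>UNIV. clsgn s A A) * trace (U ** U)
        + 2 ^ (CARD('e) - 1) * (\<Sum>C\<in>UNIV. clsgn s C C * (\<Sum>A\<in>UNIV. clsgn s A C * clsgn s C A)
          * (trace (V $ C))^2)"
    unfolding TT_def UV by (rule sum_gam_coord_trace_products[OF V])
  ultimately show ?thesis
    using assms(2) by (simp add: V_def)
qed

end

theorem mainTheorem13:
  fixes s :: "'e::{finite,linorder} \<Rightarrow> 'e \<Rightarrow> real"
    and m :: "real^'n^'n^('e set)"
    and X :: real
  assumes "sign_ok s"
    and "clsym_coeffs s m"
    and "Pcl s m X \<noteq> 0"
  shows "let U = matrix_inv (cl_block_matrix s m - X *\<^sub>R mat 1);
             UC = (\<chi> C i j. U $ (C, i) $ ({}, j)) :: real^'n^'n^('e set);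
             P' = (\<lambda>Z. deriv (Pcl s m) Z);
             P'' = deriv (deriv (Pcl s m)) X;
             p = CARD('e);
             H = (\<lambda>C. \<Sum>A\<in>UNIV. clsgn s A C * clsgn s C A)
         in clsym_coeffs s UC \<and> U = cl_block_matrix s UC
          \<and> (\<forall>Y. Y \<noteq> X \<longrightarrow>
               GammaCl s (\<lambda>x. Pcl s x X) (\<lambda>x. Pcl s x Y) m
                 = 2 ^ p / (Y - X) * (P' X * Pcl s m Y - P' Y * Pcl s m X))
          \<and> LCl s (\<lambda>x. Pcl s x X) m / Pcl s m X
              = GammaCl s (\<lambda>x. ln \<bar>Pcl s x X\<bar>) (\<lambda>x. ln \<bar>Pcl s x X\<bar>) m
                - (1/2) * (\<Sum>A\<in>UNIV. clsgn s A A) * trace (U ** U)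
                - 2 ^ (p - 1) * (\<Sum>C\<in>UNIV. clsgn s C C * H C * (trace (UC $ C))^2)
          \<and> trace (U ** U) = (P' X)^2 / (Pcl s m X)^2 - P'' / Pcl s m X"
proof -
  interpret clifford_signs s
    by (rule clifford_signs.intro) (fact assms(1))
  have "det (cl_block_matrix s m - X *\<^sub>R mat 1) \<noteq> 0"
    using assms(3) by (simp add: Pcl_def)
  then have "trace (matrix_inv (cl_block_matrix s m - X *\<^sub>R mat 1) ** matrix_inv (cl_block_matrix s m - X *\<^sub>R mat 1))
      = (deriv (Pcl s m) X)^2 / (Pcl s m X)^2 - deriv (deriv (Pcl s m)) X / Pcl s m X"
    unfolding Pcl_eq_det by (rule trace_resolvent_square)
  then show ?thesis
    unfolding Let_def cl_coeffs_def[symmetric]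
    by (intro conjI allI impI resolvent_cl_block_matrix[OF assms(2,3)] GammaCl_Pcl_Pcl[OF assms(2,3)]
        LCl_Pcl_div[OF assms(2,3)])
qed

end
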